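(* Let $k\in\{1,2\}$, $\xi\in\mathbb{C}$, $f:\mathbb{N}\to[0,\infty)$, and $A=\xi(a^\dagger)^k+\xi^*a^k+f(a^\dagger a)$ with domain $\mathcal{D}_0$. Suppose there exists $C>0$ such that $f(n)\le C\beta^{k0}_n$ for all $n\in\mathbb{N}$. Then $A$ is essentially self-adjoint.
   Context: $\mathbb{N}=\{0,1,2,\dots\}$. $\mathcal{H}$ is a separable complex Hilbert space with orthonormal basis $(\phi_n)_{n\in\mathbb{N}}$; $\mathcal{D}_0$ is the set of finite linear combinations of the $\phi_n$. The operators $a,a^\dagger$ have domain $\mathcal{D}_0$ and act by $a\phi_n=\sqrt{n}\,\phi_{n-1}$ ($a\phi_0=0$), $a^\dagger\phi_n=\sqrt{n+1}\,\phi_{n+1}$, extended linearly. $f(a^\dagger a)$ has domain $\mathcal{D}_0$ and $f(a^\dagger a)\phi_n=f(n)\phi_n$. For integers $x\ge1$ and $s\ge0$, $(x,s)=x(x+1)\cdots(x+s-1)$; $\beta^{k0}_n=\sqrt{(n+1,k)}$ (the case $l=0$ of $\beta^{kl}_n=\sqrt{(n-l+1,l)(n-l+1,k)}$). *)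

theory Defs
  imports Complex_Main
begin

text \<open>The Hilbert space H with orthonormal basis phi_n is realised (up to the
unitary identification phi_n = n-th unit vector) as l2(N): vectors are coefficient
sequences nat => complex that are square summable.\<close>

definition l2 :: "(nat \<Rightarrow> complex) set" where
  "l2 = {x. summable (\<lambda>n. (cmod (x n))^2)}"

definition ip :: "(nat \<Rightarrow> complex) \<Rightarrow> (nat \<Rightarrow> complex) \<Rightarrow> complex" where
  "ip x y = (\<Sum>n. cnj (x n) * y n)"

definition l2dist :: "(nat \<Rightarrow> complex) \<Rightarrow> (nat \<Rightarrow> complex) \<Rightarrow> real" where
  "l2dist x y = sqrt (\<Sum>n. (cmod (x n - y n))^2)"

text \<open>D0: finite linear combinations of the basis vectors.\<close>
definition D0 :: "(nat \<Rightarrow> complex) set" where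
  "D0 = {x. finite {n. x n \<noteq> 0}}"

text \<open>Annihilation a phi_n = sqrt n phi_(n-1), creation a^dag phi_n = sqrt(n+1) phi_(n+1),
written on coefficients.\<close>
definition ann :: "(nat \<Rightarrow> complex) \<Rightarrow> (nat \<Rightarrow> complex)" where
  "ann x = (\<lambda>n. complex_of_real (sqrt (real (n + 1))) * x (n + 1))"

definition cre :: "(nat \<Rightarrow> complex) \<Rightarrow> (nat \<Rightarrow> complex)" where
  "cre x = (\<lambda>n. if n = 0 then 0 else complex_of_real (sqrt (real n)) * x (n - 1))"

text \<open>f(a^dag a) phi_n = f(n) phi_n.\<close>
definition numop :: "(nat \<Rightarrow> real) \<Rightarrow> (nat \<Rightarrow> complex) \<Rightarrow> (nat \<Rightarrow> complex)" where
  "numop f x = (\<lambda>n. complex_of_real (f n) * x n)"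

definition opA :: "nat \<Rightarrow> complex \<Rightarrow> (nat \<Rightarrow> real) \<Rightarrow> (nat \<Rightarrow> complex) \<Rightarrow> (nat \<Rightarrow> complex)" where
  "opA k xi f x = (\<lambda>n. xi * (cre ^^ k) x n + cnj xi * (ann ^^ k) x n + numop f x n)"

text \<open>beta^{k0}_n = sqrt((n+1,k)), with (x,s) = x(x+1)...(x+s-1) the Pochhammer symbol.\<close>
definition beta_k0 :: "nat \<Rightarrow> nat \<Rightarrow> real" where
  "beta_k0 k n = sqrt (pochhammer (real (n + 1)) k)"

definition graph_of :: "(nat \<Rightarrow> complex) set \<Rightarrow> ((nat \<Rightarrow> complex) \<Rightarrow> (nat \<Rightarrow> complex))
    \<Rightarrow> ((nat \<Rightarrow> complex) \<times> (nat \<Rightarrow> complex)) set" where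
  "graph_of D T = {(x, T x) | x. x \<in> D}"

definition graph_closure :: "((nat \<Rightarrow> complex) \<times> (nat \<Rightarrow> complex)) set
    \<Rightarrow> ((nat \<Rightarrow> complex) \<times> (nat \<Rightarrow> complex)) set" where
  "graph_closure G = {(x, y). x \<in> l2 \<and> y \<in> l2 \<and>
      (\<exists>s. (\<forall>j. s j \<in> G) \<and> (\<lambda>j. l2dist (fst (s j)) x) \<longlonglongrightarrow> 0
                         \<and> (\<lambda>j. l2dist (snd (s j)) y) \<longlonglongrightarrow> 0)}"

definition graph_adjoint :: "((nat \<Rightarrow> complex) \<times> (nat \<Rightarrow> complex)) set
    \<Rightarrow> ((nat \<Rightarrow> complex) \<times> (nat \<Rightarrow> complex)) set" where
  "graph_adjoint G = {(y, z). y \<in> l2 \<and> z \<in> l2 \<and> (\<forall>(x, w) \<in> G. ip w y = ip x z)}"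

definition single_valued_graph :: "('a \<times> 'b) set \<Rightarrow> bool" where
  "single_valued_graph G \<longleftrightarrow> (\<forall>x y z. (x, y) \<in> G \<longrightarrow> (x, z) \<in> G \<longrightarrow> y = z)"

definition self_adjoint_graph :: "((nat \<Rightarrow> complex) \<times> (nat \<Rightarrow> complex)) set \<Rightarrow> bool" where
  "self_adjoint_graph G \<longleftrightarrow> single_valued_graph G \<and> graph_adjoint G = G"

definition essentially_self_adjoint :: "(nat \<Rightarrow> complex) set
    \<Rightarrow> ((nat \<Rightarrow> complex) \<Rightarrow> (nat \<Rightarrow> complex)) \<Rightarrow> bool" where
  "essentially_self_adjoint D T \<longleftrightarrow> D \<subseteq> l2 \<and> (\<forall>x\<in>D. T x \<in> l2) \<and>
     self_adjoint_graph (graph_closure (graph_of D T))"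

end

theory Submission
  imports Defs "HOL-Analysis.Analysis"
begin

text \<open>
  On \<open>D0\<close> the operator \<open>A\<close> is formally symmetric (\<open>a\<close> and \<open>a\<^sup>\<dagger>\<close> are mutually adjoint
  shifts, \<open>f(a\<^sup>\<dagger>a)\<close> is real diagonal), so the closure of its graph lies in the adjoint, and the
  adjoint acts on coefficients by the same formula as \<open>A\<close>. Conversely, if \<open>y\<close> and \<open>A y\<close> are
  square summable, the truncations \<open>\<chi>\<^sub>J y \<in> D0\<close> by the cut-off \<open>\<chi>\<^sub>J\<close> (equal to 1 up to \<open>J\<close>,
  0 beyond \<open>2J\<close>, piecewise linear) converge to \<open>y\<close> and \<open>A(\<chi>\<^sub>J y)\<close> converges to \<open>A y\<close>:
  the commutator \<open>[A, \<chi>\<^sub>J]\<close> has entries \<open>\<beta>\<^sup>k\<^sup>0\<^sub>n (\<chi>\<^sub>J(n+k) - \<chi>\<^sub>J(n))\<close>, and for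
  \<open>k \<le> 2\<close> the linear growth of \<open>\<beta>\<^sup>k\<^sup>0\<^sub>n\<close> is compensated by the Lipschitz constant
  \<open>1/J\<close> of \<open>\<chi>\<^sub>J\<close> on its transition region, so the commutator is bounded uniformly in \<open>J\<close> and
  dominated convergence applies. Hence the adjoint equals the closure, which is then self-adjoint.
\<close>

section \<open>Square-summable sequences\<close>

lemma D0_subset_l2: "D0 \<subseteq> l2"
proof
  fix x assume "x \<in> D0"
  then show "x \<in> l2"
    unfolding D0_def l2_def
    using summable_finite[of "{n. x n \<noteq> 0}" "\<lambda>n. (cmod (x n))\<^sup>2"] by auto
qed

lemma l2_diff: "x \<in> l2 \<Longrightarrow> y \<in> l2 \<Longrightarrow> (\<lambda>n. x n - y n) \<in> l2"
  unfolding l2_def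
proof clarify
  assume x: "summable (\<lambda>n. (cmod (x n))\<^sup>2)" and y: "summable (\<lambda>n. (cmod (y n))\<^sup>2)"
  have "(cmod (x n - y n))\<^sup>2 \<le> 2 * (cmod (x n))\<^sup>2 + 2 * (cmod (y n))\<^sup>2" for n
  proof -
    have "(cmod (x n - y n))\<^sup>2 \<le> (cmod (x n) + cmod (y n))\<^sup>2"
      by (intro power_mono norm_triangle_ineq4) simp
    also have "\<dots> \<le> 2 * (cmod (x n))\<^sup>2 + 2 * (cmod (y n))\<^sup>2"
      using sum_squares_bound[of "cmod (x n)" "cmod (y n)"] by (simp add: power2_sum)
    finally show ?thesis .
  qed
  then show "summable (\<lambda>n. (cmod (x n - y n))\<^sup>2)"
    by (intro summable_comparison_test[OF _ summable_add[OF summable_mult[OF x] summable_mult[OF y]]]) auto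
qed

lemma l2_summable_norm_mult:
  assumes "x \<in> l2" "y \<in> l2"
  shows "summable (\<lambda>n. cmod (x n) * cmod (y n))"
proof (rule summable_comparison_test[OF _ summable_add])
  have "norm (cmod (x n) * cmod (y n)) \<le> (cmod (x n))\<^sup>2 + (cmod (y n))\<^sup>2" for n
  proof -
    have "norm (cmod (x n) * cmod (y n)) = cmod (x n) * cmod (y n)"
      by simp
    moreover have "0 \<le> cmod (x n) * cmod (y n)"
      by simp
    ultimately show ?thesis
      using sum_squares_bound[of "cmod (x n)" "cmod (y n)"] by linarith
  qed
  then show "\<exists>N. \<forall>n\<ge>N. norm (cmod (x n) * cmod (y n)) \<le> (cmod (x n))\<^sup>2 + (cmod (y n))\<^sup>2"
    by blast
qed (use assms in \<open>auto simp: l2_def\<close>)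

lemma summable_ip:
  "x \<in> l2 \<Longrightarrow> y \<in> l2 \<Longrightarrow> summable (\<lambda>n. cnj (x n) * y n)"
  by (rule summable_norm_cancel) (simp add: norm_mult l2_summable_norm_mult)

lemma summable_ip_D0_left: "u \<in> D0 \<Longrightarrow> summable (\<lambda>n. cnj (u n) * x n)"
  unfolding D0_def by (rule summable_finite[of "{n. u n \<noteq> 0}"]) auto

lemma ip_Cauchy_Schwarz:
  assumes x: "x \<in> l2" and y: "y \<in> l2"
  shows "cmod (ip x y) \<le> sqrt (\<Sum>n. (cmod (x n))\<^sup>2) * sqrt (\<Sum>n. (cmod (y n))\<^sup>2)"
proof -
  have sx: "summable (\<lambda>n. (cmod (x n))\<^sup>2)" and sy: "summable (\<lambda>n. (cmod (y n))\<^sup>2)"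
    using x y by (auto simp: l2_def)
  have "cmod (ip x y) \<le> (\<Sum>n. cmod (x n) * cmod (y n))"
    unfolding ip_def using summable_norm[of "\<lambda>n. cnj (x n) * y n"]
    by (simp add: norm_mult l2_summable_norm_mult x y)
  also have "\<dots> \<le> sqrt (\<Sum>n. (cmod (x n))\<^sup>2) * sqrt (\<Sum>n. (cmod (y n))\<^sup>2)"
  proof (rule suminf_le_const[OF l2_summable_norm_mult[OF x y]])
    fix N
    have "(\<Sum>n<N. cmod (x n) * cmod (y n))
        \<le> L2_set (\<lambda>n. cmod (x n)) {..<N} * L2_set (\<lambda>n. cmod (y n)) {..<N}"
      using L2_set_mult_ineq[of "\<lambda>n. cmod (x n)" "\<lambda>n. cmod (y n)" "{..<N}"] by simp
    also have "\<dots> \<le> sqrt (\<Sum>n. (cmod (x n))\<^sup>2) * sqrt (\<Sum>n. (cmod (y n))\<^sup>2)"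
      unfolding L2_set_def
      by (intro mult_mono real_sqrt_le_mono sum_le_suminf sx sy) (auto intro: suminf_nonneg sum_nonneg sx sy)
    finally show "(\<Sum>n<N. cmod (x n) * cmod (y n)) \<le> \<dots>" .
  qed
  finally show ?thesis .
qed

lemma ip_cnj:
  assumes "x \<in> l2" "y \<in> l2"
  shows "ip x y = cnj (ip y x)"
proof -
  have "(\<lambda>n. cnj (y n) * x n) sums ip y x"
    unfolding ip_def using summable_ip[OF assms(2,1)] by (rule summable_sums)
  then have "(\<lambda>n. cnj (x n) * y n) sums cnj (ip y x)"
    using sums_cnj[of "\<lambda>n. cnj (y n) * x n"] by (simp add: mult.commute)
  then show ?thesis
    unfolding ip_def by (simp add: sums_iff)
qed

lemma tendsto_ip_right:
  assumes a: "a \<in> l2" and x: "x \<in> l2" and b: "\<And>j. b j \<in> l2"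
    and lim: "(\<lambda>j. l2dist (b j) x) \<longlonglongrightarrow> 0"
  shows "(\<lambda>j. ip a (b j)) \<longlonglongrightarrow> ip a x"
proof -
  define c where "c = sqrt (\<Sum>n. (cmod (a n))\<^sup>2)"
  have "norm (ip a (b j) - ip a x) \<le> c * l2dist (b j) x" for j
  proof -
    have "ip a (b j) - ip a x = ip a (\<lambda>n. b j n - x n)"
      unfolding ip_def using a b x
      by (subst suminf_diff) (auto intro: summable_ip simp: right_diff_distrib)
    then show ?thesis
      using ip_Cauchy_Schwarz[OF a l2_diff[OF b x]] by (simp add: l2dist_def c_def)
  qed
  then have "\<forall>\<^sub>F j in sequentially. norm (ip a (b j) - ip a x) \<le> c * l2dist (b j) x"
    by (rule always_eventually[OF allI])
  from Lim_null_comparison[OF this tendsto_mult_right_zero[OF lim]]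
  show ?thesis
    by (simp add: LIM_zero_iff)
qed

lemma tendsto_ip_left:
  assumes "a \<in> l2" "x \<in> l2" "\<And>j. b j \<in> l2"
    and "(\<lambda>j. l2dist (b j) x) \<longlonglongrightarrow> 0"
  shows "(\<lambda>j. ip (b j) a) \<longlonglongrightarrow> ip x a"
  using tendsto_cnj[OF tendsto_ip_right[OF assms]] assms(1-3) by (simp add: ip_cnj[of a])

lemma l2dist_tendsto_0I:
  assumes h: "summable h" and dom: "\<And>j n. (cmod (x j n - y n))\<^sup>2 \<le> h n"
    and ev: "\<And>n. \<forall>\<^sub>F j in sequentially. x j n = y n"
  shows "(\<lambda>j. l2dist (x j) y) \<longlonglongrightarrow> 0"
proof -
  have "(\<lambda>j. \<Sum>n. (cmod (x j n - y n))\<^sup>2) \<longlonglongrightarrow> (\<Sum>n. 0 :: real)"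
  proof (rule tannerys_theorem[THEN conjunct2, THEN conjunct2])
    show "(\<lambda>j. (cmod (x j n - y n))\<^sup>2) \<longlonglongrightarrow> 0" for n
      by (rule tendsto_eventually) (use ev[of n] in \<open>auto elim: eventually_mono\<close>)
    show "\<forall>\<^sub>F (n, j) in sequentially \<times>\<^sub>F sequentially. norm ((cmod (x j n - y n))\<^sup>2) \<le> h n"
      using dom by (intro always_eventually) auto
    show "summable h"
      by (rule h)
  qed simp
  then show ?thesis
    unfolding l2dist_def using tendsto_real_sqrt[of _ 0] by simp
qed

section \<open>Closures and adjoints of graphs\<close>

lemma graph_subset_graph_closure:
  assumes "G \<subseteq> l2 \<times> l2"
  shows "G \<subseteq> graph_closure G"
proof
  fix p assume "p \<in> G"
  then show "p \<in> graph_closure G"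
    using assms unfolding graph_closure_def
    by (auto simp: l2dist_def intro!: exI[of _ "\<lambda>j. p"])
qed

lemma graph_closure_subset_graph_adjoint:
  assumes G: "G \<subseteq> l2 \<times> l2" and sym: "G \<subseteq> graph_adjoint G"
  shows "graph_closure G \<subseteq> graph_adjoint G"
proof clarify
  fix x w assume "(x, w) \<in> graph_closure G"
  then obtain s where xw: "x \<in> l2" "w \<in> l2" and s: "\<And>j. s j \<in> G"
    and lim1: "(\<lambda>j. l2dist (fst (s j)) x) \<longlonglongrightarrow> 0"
    and lim2: "(\<lambda>j. l2dist (snd (s j)) w) \<longlonglongrightarrow> 0"
    unfolding graph_closure_def by blast
  have s_l2: "fst (s j) \<in> l2" "snd (s j) \<in> l2" for j
    using subsetD[OF G s] by (simp_all add: mem_Times_iff)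
  have "ip v x = ip u w" if uv: "(u, v) \<in> G" for u v
  proof -
    have "(\<lambda>j. ip v (fst (s j))) \<longlonglongrightarrow> ip v x"
      using uv G by (intro tendsto_ip_right[OF _ xw(1) s_l2(1) lim1]) auto
    moreover have "(\<lambda>j. ip u (snd (s j))) \<longlonglongrightarrow> ip u w"
      using uv G by (intro tendsto_ip_right[OF _ xw(2) s_l2(2) lim2]) auto
    moreover have "ip v (fst (s j)) = ip u (snd (s j))" for j
      using sym uv s[of j] by (auto simp: graph_adjoint_def split: prod.splits)
    ultimately show ?thesis
      using LIMSEQ_unique by auto
  qed
  then show "(x, w) \<in> graph_adjoint G"
    using xw by (auto simp: graph_adjoint_def)
qed

lemma graph_adjoint_graph_closure:
  assumes G: "G \<subseteq> l2 \<times> l2"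
  shows "graph_adjoint (graph_closure G) = graph_adjoint G"
proof
  show "graph_adjoint (graph_closure G) \<subseteq> graph_adjoint G"
    using graph_subset_graph_closure[OF G] unfolding graph_adjoint_def by blast
next
  show "graph_adjoint G \<subseteq> graph_adjoint (graph_closure G)"
  proof clarify
    fix y z assume yz: "(y, z) \<in> graph_adjoint G"
    then have yz_l2: "y \<in> l2" "z \<in> l2" and adj: "\<And>u v. (u, v) \<in> G \<Longrightarrow> ip v y = ip u z"
      by (auto simp: graph_adjoint_def)
    have "ip w y = ip x z" if xw_closure: "(x, w) \<in> graph_closure G" for x w
    proof -
      obtain s where xw: "x \<in> l2" "w \<in> l2" and s: "\<And>j. s j \<in> G"
        and lim1: "(\<lambda>j. l2dist (fst (s j)) x) \<longlonglongrightarrow> 0"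
        and lim2: "(\<lambda>j. l2dist (snd (s j)) w) \<longlonglongrightarrow> 0"
        using xw_closure unfolding graph_closure_def by blast
      have s_l2: "fst (s j) \<in> l2" "snd (s j) \<in> l2" for j
        using subsetD[OF G s] by (simp_all add: mem_Times_iff)
      have "(\<lambda>j. ip (snd (s j)) y) \<longlonglongrightarrow> ip w y"
        by (rule tendsto_ip_left[OF yz_l2(1) xw(2) s_l2(2) lim2])
      moreover have "(\<lambda>j. ip (fst (s j)) z) \<longlonglongrightarrow> ip x z"
        by (rule tendsto_ip_left[OF yz_l2(2) xw(1) s_l2(1) lim1])
      moreover have "ip (snd (s j)) y = ip (fst (s j)) z" for j
        using adj[of "fst (s j)" "snd (s j)"] s[of j] by simp
      ultimately show ?thesis
        using LIMSEQ_unique by auto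
    qed
    then show "(y, z) \<in> graph_adjoint (graph_closure G)"
      using yz_l2 by (auto simp: graph_adjoint_def)
  qed
qed

definition unit_vec :: "nat \<Rightarrow> nat \<Rightarrow> complex" where
  "unit_vec m = (\<lambda>n. if n = m then 1 else 0)"

lemma unit_vec_in_D0: "unit_vec m \<in> D0"
  by (simp add: unit_vec_def D0_def)

lemma ip_unit_vec_left: "ip (unit_vec m) x = x m"
proof -
  have "(\<lambda>n. cnj (unit_vec m n) * x n) = (\<lambda>n. if n = m then x n else 0)"
    by (auto simp: unit_vec_def)
  then show ?thesis
    unfolding ip_def using sums_single[of m x] by (simp add: sums_iff)
qed

lemma graph_adjoint_graph_of_D0_eq:
  assumes sym: "\<And>u x. u \<in> D0 \<Longrightarrow> ip (T u) x = ip u (T x)"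
    and adj: "(y, z) \<in> graph_adjoint (graph_of D0 T)"
  shows "z = T y"
proof
  fix m
  have "ip (T (unit_vec m)) y = ip (unit_vec m) z"
    using adj unit_vec_in_D0[of m] by (auto simp: graph_adjoint_def graph_of_def)
  then show "z m = T y m"
    by (simp add: sym unit_vec_in_D0 ip_unit_vec_left)
qed

lemma essentially_self_adjoint_D0I:
  assumes T_D0: "\<And>u. u \<in> D0 \<Longrightarrow> T u \<in> D0"
    and sym: "\<And>u x. u \<in> D0 \<Longrightarrow> ip (T u) x = ip u (T x)"
    and adj_closure: "graph_adjoint (graph_of D0 T) \<subseteq> graph_closure (graph_of D0 T)"
  shows "essentially_self_adjoint D0 T"
proof -
  let ?G = "graph_of D0 T"
  have G_l2: "?G \<subseteq> l2 \<times> l2"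
    using D0_subset_l2 T_D0 by (auto simp: graph_of_def)
  have "?G \<subseteq> graph_adjoint ?G"
    using D0_subset_l2 T_D0 by (auto simp: graph_of_def graph_adjoint_def sym)
  then have closure_eq: "graph_closure ?G = graph_adjoint ?G"
    using graph_closure_subset_graph_adjoint[OF G_l2] adj_closure by blast
  have "single_valued_graph (graph_closure ?G)"
    unfolding single_valued_graph_def closure_eq
    using graph_adjoint_graph_of_D0_eq[OF sym] by blast
  moreover have "graph_adjoint (graph_closure ?G) = graph_closure ?G"
    using graph_adjoint_graph_closure[OF G_l2] closure_eq by simp
  ultimately show ?thesis
    unfolding essentially_self_adjoint_def self_adjoint_graph_def
    using D0_subset_l2 T_D0 by blast
qed

section \<open>Symmetry of the operator on finite sequences\<close>

lemma D0_iff_eventually_zero: "x \<in> D0 \<longleftrightarrow> (\<exists>m. \<forall>n>m. x n = 0)"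
  unfolding D0_def using MOST_nat[of "\<lambda>n. x n = 0"] by (simp add: MOST_iff_cofinite)

lemma D0_add: "x \<in> D0 \<Longrightarrow> y \<in> D0 \<Longrightarrow> (\<lambda>n. x n + y n) \<in> D0"
  unfolding D0_def mem_Collect_eq
  by (rule finite_subset[of _ "{n. x n \<noteq> 0} \<union> {n. y n \<noteq> 0}"]) auto

lemma D0_mult: "x \<in> D0 \<Longrightarrow> (\<lambda>n. c n * x n) \<in> D0"
  unfolding D0_def mem_Collect_eq
  by (rule finite_subset[of _ "{n. x n \<noteq> 0}"]) auto

lemma D0_cre: "x \<in> D0 \<Longrightarrow> cre x \<in> D0"
proof -
  assume "x \<in> D0"
  then obtain m where "\<forall>n>m. x n = 0"
    by (auto simp: D0_iff_eventually_zero)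
  then have "\<forall>n>Suc m. cre x n = 0"
    by (simp add: cre_def)
  then show ?thesis
    by (auto simp: D0_iff_eventually_zero)
qed

lemma D0_ann: "x \<in> D0 \<Longrightarrow> ann x \<in> D0"
proof -
  assume "x \<in> D0"
  then obtain m where "\<forall>n>m. x n = 0"
    by (auto simp: D0_iff_eventually_zero)
  then have "\<forall>n>m. ann x n = 0"
    by (simp add: ann_def)
  then show ?thesis
    by (auto simp: D0_iff_eventually_zero)
qed

lemma D0_funpow: "(\<And>x. x \<in> D0 \<Longrightarrow> T x \<in> D0) \<Longrightarrow> x \<in> D0 \<Longrightarrow> (T ^^ k) x \<in> D0"
  by (induction k) auto

lemma D0_opA: "x \<in> D0 \<Longrightarrow> opA k xi f x \<in> D0"
  unfolding opA_def numop_def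
  by (intro D0_add D0_mult D0_funpow D0_cre D0_ann)

lemma ip_cre: "u \<in> D0 \<Longrightarrow> ip (cre u) x = ip u (ann x)"
proof -
  assume u: "u \<in> D0"
  let ?g = "\<lambda>n. cnj (cre u n) * x n"
  have "(\<Sum>n. ?g (Suc n)) = suminf ?g - ?g 0"
    by (rule suminf_split_head[OF summable_ip_D0_left[OF D0_cre[OF u]]])
  moreover have "(\<lambda>n. ?g (Suc n)) = (\<lambda>n. cnj (u n) * ann x n)"
    by (auto simp: cre_def ann_def)
  ultimately show ?thesis
    by (simp add: ip_def cre_def)
qed

lemma ip_ann: "u \<in> D0 \<Longrightarrow> ip (ann u) x = ip u (cre x)"
proof -
  assume u: "u \<in> D0"
  let ?g = "\<lambda>n. cnj (u n) * cre x n"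
  have "(\<Sum>n. ?g (Suc n)) = suminf ?g - ?g 0"
    by (rule suminf_split_head[OF summable_ip_D0_left[OF u]])
  moreover have "(\<lambda>n. ?g (Suc n)) = (\<lambda>n. cnj (ann u n) * x n)"
    by (auto simp: cre_def ann_def)
  ultimately show ?thesis
    by (simp add: ip_def cre_def)
qed

lemma ip_funpow_adjoint:
  assumes T_D0: "\<And>u. u \<in> D0 \<Longrightarrow> T u \<in> D0"
    and adj: "\<And>u x. u \<in> D0 \<Longrightarrow> ip (T u) x = ip u (S x)"
    and u: "u \<in> D0"
  shows "ip ((T ^^ k) u) x = ip u ((S ^^ k) x)"
  using u
proof (induction k arbitrary: x)
  case (Suc k)
  have "ip ((T ^^ Suc k) u) x = ip ((T ^^ k) u) (S x)"
    using adj D0_funpow[OF T_D0 Suc.prems] by simp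
  also have "\<dots> = ip u ((S ^^ Suc k) x)"
    using Suc by (simp add: funpow_Suc_right del: funpow.simps)
  finally show ?case .
qed simp

lemma ip_add_left:
  "summable (\<lambda>n. cnj (u n) * x n) \<Longrightarrow> summable (\<lambda>n. cnj (v n) * x n) \<Longrightarrow>
    ip (\<lambda>n. u n + v n) x = ip u x + ip v x"
  unfolding ip_def by (simp add: distrib_right suminf_add)

lemma ip_add_right:
  "summable (\<lambda>n. cnj (u n) * x n) \<Longrightarrow> summable (\<lambda>n. cnj (u n) * y n) \<Longrightarrow>
    ip u (\<lambda>n. x n + y n) = ip u x + ip u y"
  unfolding ip_def by (simp add: distrib_left suminf_add)

lemma ip_scale_left:
  "summable (\<lambda>n. cnj (u n) * x n) \<Longrightarrow> ip (\<lambda>n. c * u n) x = cnj c * ip u x"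
  unfolding ip_def by (simp add: suminf_mult[symmetric] mult.assoc)

lemma ip_scale_right:
  "summable (\<lambda>n. cnj (u n) * x n) \<Longrightarrow> ip u (\<lambda>n. c * x n) = c * ip u x"
  unfolding ip_def by (simp add: suminf_mult[symmetric] mult.left_commute)

lemma ip_numop: "ip (numop f u) x = ip u (numop f x)"
  unfolding ip_def numop_def by (simp add: ac_simps)

lemma ip_opA_symmetric:
  assumes u: "u \<in> D0"
  shows "ip (opA k xi f u) x = ip u (opA k xi f x)"
proof -
  let ?C = "(cre ^^ k) u" and ?A = "(ann ^^ k) u"
  have D0: "?C \<in> D0" "?A \<in> D0" "numop f u \<in> D0"
    using u unfolding numop_def by (auto intro: D0_funpow D0_cre D0_ann D0_mult)
  have "ip (opA k xi f u) x = ip (\<lambda>n. xi * ?C n + cnj xi * ?A n) x + ip (numop f u) x"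
    unfolding opA_def by (rule ip_add_left; intro summable_ip_D0_left D0_add D0_mult D0)
  also have "ip (\<lambda>n. xi * ?C n + cnj xi * ?A n) x = ip (\<lambda>n. xi * ?C n) x + ip (\<lambda>n. cnj xi * ?A n) x"
    by (rule ip_add_left; intro summable_ip_D0_left D0_mult D0)
  also have "\<dots> = cnj xi * ip u ((ann ^^ k) x) + xi * ip u ((cre ^^ k) x)"
    using u by (simp add: ip_scale_left summable_ip_D0_left D0
        ip_funpow_adjoint[OF D0_cre ip_cre] ip_funpow_adjoint[OF D0_ann ip_ann])
  also have "\<dots> + ip (numop f u) x = ip u (opA k xi f x)"
    unfolding opA_def ip_numop
    by (simp add: ip_add_right ip_scale_right summable_ip_D0_left u)
  finally show ?thesis .
qed

section \<open>Cut-offs and their commutators with the ladder operators\<close>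

lemma beta_k0_Suc: "beta_k0 (Suc k) n = beta_k0 k n * sqrt (real (n + k + 1))"
  by (simp add: beta_k0_def pochhammer_Suc real_sqrt_mult add_ac)

lemma ann_funpow_eq: "(ann ^^ k) x n = complex_of_real (beta_k0 k n) * x (n + k)"
proof (induction k arbitrary: x)
  case 0
  then show ?case
    by (simp add: beta_k0_def)
next
  case (Suc k)
  have "(ann ^^ Suc k) x n = complex_of_real (beta_k0 k n) * ann x (n + k)"
    unfolding funpow_Suc_right comp_def by (rule Suc.IH)
  also have "\<dots> = complex_of_real (beta_k0 (Suc k) n) * x (n + Suc k)"
    by (simp add: ann_def beta_k0_Suc add_ac)
  finally show ?case .
qed

lemma cre_funpow_eq:
  "(cre ^^ k) x n = (if k \<le> n then complex_of_real (beta_k0 k (n - k)) * x (n - k) else 0)"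
proof (induction k arbitrary: n)
  case 0
  then show ?case
    by (simp add: beta_k0_def)
next
  case (Suc k)
  show ?case
  proof (cases "Suc k \<le> n")
    case True
    then have "beta_k0 (Suc k) (n - Suc k) = sqrt (real n) * beta_k0 k (n - 1 - k)"
      by (simp add: beta_k0_Suc Suc_diff_Suc)
    then show ?thesis
      using True Suc.IH[of "n - 1"] by (simp add: cre_def)
  qed (use Suc.IH[of "n - 1"] in \<open>auto simp: cre_def\<close>)
qed

lemma beta_k0_le:
  assumes "k \<le> 2"
  shows "beta_k0 k n \<le> real (n + k + 1)"
proof -
  have "pochhammer (real (n + 1)) k \<le> (real (n + k + 1))\<^sup>2"
    using assms by (cases k; cases "k - 1") (auto simp: pochhammer_Suc power2_eq_square algebra_simps)
  then show ?thesis
    unfolding beta_k0_def using real_sqrt_le_mono by fastforce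
qed

definition cutoff :: "real \<Rightarrow> nat \<Rightarrow> real" where
  "cutoff J n = min 1 (max 0 (2 - real n / J))"

lemma cutoff_nonneg: "0 \<le> cutoff J n"
  and cutoff_le_one: "cutoff J n \<le> 1"
  by (auto simp: cutoff_def)

lemma cutoff_eq_1: "0 < J \<Longrightarrow> real n \<le> J \<Longrightarrow> cutoff J n = 1"
  by (auto simp: cutoff_def field_simps)

lemma cutoff_eq_0: "0 < J \<Longrightarrow> 2 * J \<le> real n \<Longrightarrow> cutoff J n = 0"
  by (auto simp: cutoff_def field_simps)

lemma numop_cutoff_in_D0:
  assumes "0 < J"
  shows "numop (cutoff J) y \<in> D0"
proof -
  have "2 * J \<le> real n" if "nat \<lceil>2 * J\<rceil> < n" for n
    using real_nat_ceiling_ge[of "2 * J"] that by linarith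
  then have "\<forall>n > nat \<lceil>2 * J\<rceil>. numop (cutoff J) y n = 0"
    using assms by (simp add: numop_def cutoff_eq_0)
  then show ?thesis
    by (auto simp: D0_iff_eventually_zero)
qed

lemma cutoff_Lipschitz: "0 < J \<Longrightarrow> \<bar>cutoff J a - cutoff J b\<bar> \<le> \<bar>real a - real b\<bar> / J"
proof -
  assume J: "0 < J"
  have "\<bar>cutoff J a - cutoff J b\<bar> \<le> \<bar>(2 - real a / J) - (2 - real b / J)\<bar>"
    unfolding cutoff_def by (auto simp: min_def max_def)
  also have "\<dots> = \<bar>(real b - real a) / J\<bar>"
    by (simp add: diff_divide_distrib)
  also have "\<dots> = \<bar>real a - real b\<bar> / J"
    using J by (simp add: abs_minus_commute)
  finally show ?thesis .
qed

lemma cutoff_diff_weighted_le: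
  assumes J: "1 \<le> J"
  shows "\<bar>cutoff J (m + d) - cutoff J m\<bar> * real (2 * m + d + 1) \<le> real (d * (d + 5))"
proof (cases "2 * J \<le> real m")
  case True
  then show ?thesis
    using J by (simp add: cutoff_eq_0)
next
  case False
  have "\<bar>cutoff J (m + d) - cutoff J m\<bar> \<le> real d / J"
    using cutoff_Lipschitz[of J "m + d" m] J by simp
  moreover have "real (2 * m + d + 1) \<le> 4 * J + real d + 1"
    using False by simp
  ultimately have "\<bar>cutoff J (m + d) - cutoff J m\<bar> * real (2 * m + d + 1)
      \<le> real d / J * (4 * J + real d + 1)"
    by (intro mult_mono) auto
  also have "\<dots> = 4 * real d + real d * (real d + 1) / J"
    using J by (simp add: field_simps)
  also have "\<dots> \<le> 4 * real d + real d * (real d + 1)"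
    using divide_left_mono[of 1 J "real d * (real d + 1)"] J by simp
  finally show ?thesis
    by (simp add: algebra_simps)
qed

lemma beta_k0_nonneg: "0 \<le> beta_k0 k n"
  by (simp add: beta_k0_def pochhammer_pos less_imp_le)

lemma beta_k0_cutoff_diff_le:
  assumes "k \<le> 2" "1 \<le> J"
  shows "\<bar>beta_k0 k m * (cutoff J (m + k) - cutoff J m)\<bar> \<le> real (k * (k + 5))"
proof -
  have "beta_k0 k m \<le> real (2 * m + k + 1)"
    using beta_k0_le[OF assms(1), of m] by simp
  then have "\<bar>beta_k0 k m\<bar> * \<bar>cutoff J (m + k) - cutoff J m\<bar>
      \<le> real (2 * m + k + 1) * \<bar>cutoff J (m + k) - cutoff J m\<bar>"
    by (intro mult_right_mono) (auto simp: beta_k0_nonneg)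
  also have "\<dots> \<le> real (k * (k + 5))"
    using cutoff_diff_weighted_le[OF assms(2)] by (simp add: mult.commute)
  finally show ?thesis
    by (simp add: abs_mult)
qed

definition cutoff_commutator ::
    "real \<Rightarrow> ((nat \<Rightarrow> complex) \<Rightarrow> nat \<Rightarrow> complex) \<Rightarrow> (nat \<Rightarrow> complex) \<Rightarrow> nat \<Rightarrow> complex" where
  "cutoff_commutator J T y = (\<lambda>n. T (numop (cutoff J) y) n - numop (cutoff J) (T y) n)"

lemma cutoff_commutator_ann_funpow:
  "cutoff_commutator J (ann ^^ k) y n
    = complex_of_real (beta_k0 k n * (cutoff J (n + k) - cutoff J n)) * y (n + k)"
  by (simp add: cutoff_commutator_def ann_funpow_eq numop_def algebra_simps)

lemma cutoff_commutator_cre_funpow: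
  "cutoff_commutator J (cre ^^ k) y n = (if k \<le> n
    then complex_of_real (beta_k0 k (n - k) * (cutoff J (n - k) - cutoff J n)) * y (n - k)
    else 0)"
  by (simp add: cutoff_commutator_def cre_funpow_eq numop_def algebra_simps)

lemma norm_cutoff_commutator_ann_funpow_le:
  assumes "k \<le> 2" "1 \<le> J"
  shows "cmod (cutoff_commutator J (ann ^^ k) y n) \<le> real (k * (k + 5)) * cmod (y (n + k))"
  unfolding cutoff_commutator_ann_funpow norm_mult norm_of_real
  by (intro mult_right_mono beta_k0_cutoff_diff_le assms) simp

lemma norm_cutoff_commutator_cre_funpow_le:
  assumes "k \<le> 2" "1 \<le> J"
  shows "cmod (cutoff_commutator J (cre ^^ k) y n) \<le> real (k * (k + 5)) * cmod (y (n - k))"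
proof (cases "k \<le> n")
  case True
  have bound: "\<bar>beta_k0 k (n - k) * (cutoff J (n - k) - cutoff J n)\<bar> \<le> real (k * (k + 5))"
    using beta_k0_cutoff_diff_le[OF assms, of "n - k"] True by (simp add: abs_minus_commute abs_mult)
  show ?thesis
    unfolding cutoff_commutator_cre_funpow
    using True by (simp only: if_True norm_mult norm_of_real) (rule mult_right_mono[OF bound norm_ge_zero])
qed (simp add: cutoff_commutator_cre_funpow)

lemma cutoff_commutator_funpow_eq_0:
  assumes "0 < J" "real (n + k) \<le> J"
  shows "cutoff_commutator J (ann ^^ k) y n = 0"
    and "cutoff_commutator J (cre ^^ k) y n = 0"
  using assms
  by (simp_all add: cutoff_commutator_ann_funpow cutoff_commutator_cre_funpow cutoff_eq_1)

lemma norm_cutoff_minus_one_le: "cmod (complex_of_real (cutoff J n - 1)) \<le> 1"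
  unfolding norm_of_real using cutoff_nonneg[of J n] cutoff_le_one[of J n] by simp

lemma opA_numop_cutoff_diff:
  "opA k xi f (numop (cutoff J) y) n - opA k xi f y n
    = complex_of_real (cutoff J n - 1) * opA k xi f y n
      + xi * cutoff_commutator J (cre ^^ k) y n + cnj xi * cutoff_commutator J (ann ^^ k) y n"
  by (simp add: opA_def numop_def cutoff_commutator_def algebra_simps)

lemma norm_opA_numop_cutoff_diff_le:
  assumes k: "k \<le> 2" and J: "1 \<le> J"
  shows "(cmod (opA k xi f (numop (cutoff J) y) n - opA k xi f y n))\<^sup>2
    \<le> 3 * ((cmod (opA k xi f y n))\<^sup>2
      + (cmod xi * real (k * (k + 5)))\<^sup>2 * ((cmod (y (n - k)))\<^sup>2 + (cmod (y (n + k)))\<^sup>2))"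
proof -
  let ?K = "cmod xi * real (k * (k + 5))"
  define p q r where "p = cmod (opA k xi f y n)"
    and "q = ?K * cmod (y (n - k))" and "r = ?K * cmod (y (n + k))"
  have "cmod (complex_of_real (cutoff J n - 1) * opA k xi f y n) \<le> p"
    unfolding p_def norm_mult
    by (rule mult_left_le_one_le[OF norm_ge_zero norm_ge_zero norm_cutoff_minus_one_le])
  moreover have "cmod (xi * cutoff_commutator J (cre ^^ k) y n) \<le> q"
    unfolding q_def norm_mult
    using mult_left_mono[OF norm_cutoff_commutator_cre_funpow_le[OF k J], of "cmod xi"]
    by (simp add: mult.assoc)
  moreover have "cmod (cnj xi * cutoff_commutator J (ann ^^ k) y n) \<le> r"
    unfolding r_def norm_mult complex_mod_cnj
    using mult_left_mono[OF norm_cutoff_commutator_ann_funpow_le[OF k J], of "cmod xi"]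
    by (simp add: mult.assoc)
  ultimately have "cmod (opA k xi f (numop (cutoff J) y) n - opA k xi f y n) \<le> p + q + r"
    unfolding opA_numop_cutoff_diff by (smt (verit) norm_triangle_ineq)
  then have "(cmod (opA k xi f (numop (cutoff J) y) n - opA k xi f y n))\<^sup>2 \<le> (p + q + r)\<^sup>2"
    by (intro power_mono) auto
  also have "\<dots> \<le> 3 * (p\<^sup>2 + q\<^sup>2 + r\<^sup>2)"
    using sum_squares_ge_zero[of "p - q" "q - r"] zero_le_power2[of "p - r"]
    by (simp add: power2_eq_square algebra_simps)
  also have "\<dots> = 3 * ((cmod (opA k xi f y n))\<^sup>2
      + ?K\<^sup>2 * ((cmod (y (n - k)))\<^sup>2 + (cmod (y (n + k)))\<^sup>2))"
    by (simp only: p_def q_def r_def power_mult_distrib) (simp add: algebra_simps)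
  finally show ?thesis .
qed

lemma l2dist_numop_cutoff_tendsto_0:
  assumes "y \<in> l2"
  shows "(\<lambda>j. l2dist (numop (cutoff (real j + 2)) y) y) \<longlonglongrightarrow> 0"
proof (rule l2dist_tendsto_0I)
  show "summable (\<lambda>n. (cmod (y n))\<^sup>2)"
    using assms by (simp add: l2_def)
  show "(cmod (numop (cutoff (real j + 2)) y n - y n))\<^sup>2 \<le> (cmod (y n))\<^sup>2" for j n
  proof -
    have diff_eq:
      "numop (cutoff (real j + 2)) y n - y n = complex_of_real (cutoff (real j + 2) n - 1) * y n"
      by (simp add: numop_def algebra_simps)
    have "cmod (numop (cutoff (real j + 2)) y n - y n) \<le> cmod (y n)"
      unfolding diff_eq norm_mult
      by (rule mult_left_le_one_le[OF norm_ge_zero norm_ge_zero norm_cutoff_minus_one_le])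
    then show ?thesis
      by (intro power_mono) auto
  qed
  show "\<forall>\<^sub>F j in sequentially. numop (cutoff (real j + 2)) y n = y n" for n
    by (intro eventually_sequentiallyI[of n]) (simp add: numop_def cutoff_eq_1)
qed

lemma l2dist_opA_numop_cutoff_tendsto_0:
  assumes k: "k \<le> 2" and y: "y \<in> l2" and Ay: "opA k xi f y \<in> l2"
  shows "(\<lambda>j. l2dist (opA k xi f (numop (cutoff (real j + 2)) y)) (opA k xi f y)) \<longlonglongrightarrow> 0"
proof (rule l2dist_tendsto_0I)
  have "summable (\<lambda>n. (cmod (y n))\<^sup>2)"
    using y by (simp add: l2_def)
  then have "summable (\<lambda>n. (cmod (y (n - k)))\<^sup>2)" "summable (\<lambda>n. (cmod (y (n + k)))\<^sup>2)"
    using summable_iff_shift[of "\<lambda>n. (cmod (y (n - k)))\<^sup>2" k]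
      summable_iff_shift[of "\<lambda>n. (cmod (y n))\<^sup>2" k] by simp_all
  then show "summable (\<lambda>n. 3 * ((cmod (opA k xi f y n))\<^sup>2
    + (cmod xi * real (k * (k + 5)))\<^sup>2 * ((cmod (y (n - k)))\<^sup>2 + (cmod (y (n + k)))\<^sup>2)))"
    using Ay by (intro summable_mult summable_add) (simp_all add: l2_def)
  show "(cmod (opA k xi f (numop (cutoff (real j + 2)) y) n - opA k xi f y n))\<^sup>2
    \<le> 3 * ((cmod (opA k xi f y n))\<^sup>2
      + (cmod xi * real (k * (k + 5)))\<^sup>2 * ((cmod (y (n - k)))\<^sup>2 + (cmod (y (n + k)))\<^sup>2))" for j n
    by (rule norm_opA_numop_cutoff_diff_le[OF k]) simp
  show "\<forall>\<^sub>F j in sequentially. opA k xi f (numop (cutoff (real j + 2)) y) n = opA k xi f y n" for n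
  proof (rule eventually_sequentiallyI[of n])
    fix j assume "n \<le> j"
    then have "real (n + k) \<le> real j + 2"
      using k by simp
    then show "opA k xi f (numop (cutoff (real j + 2)) y) n = opA k xi f y n"
      using opA_numop_cutoff_diff[of k xi f "real j + 2" y n]
        cutoff_commutator_funpow_eq_0[of "real j + 2" n k y]
      by (simp add: cutoff_eq_1)
  qed
qed

lemma graph_adjoint_subset_graph_closure_opA:
  assumes k: "k \<le> 2"
  shows "graph_adjoint (graph_of D0 (opA k xi f)) \<subseteq> graph_closure (graph_of D0 (opA k xi f))"
proof clarify
  fix y z assume adj: "(y, z) \<in> graph_adjoint (graph_of D0 (opA k xi f))"
  then have y: "y \<in> l2" and z: "z \<in> l2"
    by (auto simp: graph_adjoint_def)
  have z_eq: "z = opA k xi f y"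
    by (rule graph_adjoint_graph_of_D0_eq[OF ip_opA_symmetric adj])
  with z have Ay: "opA k xi f y \<in> l2"
    by simp
  let ?y = "\<lambda>j. numop (cutoff (real j + 2)) y"
  have "(?y j, opA k xi f (?y j)) \<in> graph_of D0 (opA k xi f)" for j
    using numop_cutoff_in_D0[of "real j + 2"] by (simp add: graph_of_def)
  moreover note l2dist_numop_cutoff_tendsto_0[OF y]
  moreover note l2dist_opA_numop_cutoff_tendsto_0[OF k y Ay]
  ultimately show "(y, z) \<in> graph_closure (graph_of D0 (opA k xi f))"
    unfolding graph_closure_def z_eq using y Ay
    by (auto intro!: exI[of _ "\<lambda>j. (?y j, opA k xi f (?y j))"])
qed

theorem proposition3p1:
  fixes k :: nat and xi :: complex and f :: "nat \<Rightarrow> real"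
  assumes "k \<in> {1, 2}"
    and "\<And>n. f n \<ge> 0"
    and "\<exists>C > 0. \<forall>n. f n \<le> C * beta_k0 k n"
  shows "essentially_self_adjoint D0 (opA k xi f)"
proof -
  have "k \<le> 2"
    using assms(1) by auto
  then show ?thesis
    by (intro essentially_self_adjoint_D0I D0_opA ip_opA_symmetric
        graph_adjoint_subset_graph_closure_opA)
qed

end
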